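(* Let $F$ be an infinite field, $n>1$ an integer, and $p\in F[x]$ a nonconstant polynomial. Then every noncentral matrix in $\mathrm{M}_n(F)$ with trace zero belongs to $p[\mathrm{M}_n(F),\mathrm{M}_n(F)]=\{p(AB)-p(BA)\mid A,B\in\mathrm{M}_n(F)\}$. Moreover, if $F$ has characteristic zero, then $$p[\mathrm{M}_n(F),\mathrm{M}_n(F)]=\{A\in\mathrm{M}_n(F)\mid \mathrm{trace}(A)=0\}.$$ *)

theory Defs
  imports "HOL-Analysis.Analysis" "HOL-Computational_Algebra.Polynomial"
begin

primrec matpow :: "'a::semiring_1^'n^'n \<Rightarrow> nat \<Rightarrow> 'a^'n^'n" where
  "matpow A 0 = mat 1"
| "matpow A (Suc k) = A ** matpow A k"

definition poly_mat :: "'a::comm_ring_1 poly \<Rightarrow> 'a^'n^'n \<Rightarrow> 'a^'n^'n" where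
  "poly_mat p A = (\<Sum>i\<le>degree p. mat (coeff p i) ** matpow A i)"

definition central_mat :: "'a::semiring_1^'n^'n \<Rightarrow> bool" where
  "central_mat A \<longleftrightarrow> (\<forall>B. A ** B = B ** A)"

definition poly_commutator_image :: "'a::comm_ring_1 poly \<Rightarrow> ('a^'n^'n) set" where
  "poly_commutator_image p = {poly_mat p (A ** B) - poly_mat p (B ** A) | A B. True}"

end

theory Submission
  imports Defs
begin

text \<open>
  Over any field, a trace-zero matrix \<open>C\<close> that is not scalar is similar to a matrix \<open>C'\<close>
  with zero diagonal (Fillmore). One row operation at a time (a shear \<open>I + e\<^sub>a z\<^sup>T\<close> and its
  inverse) kills one diagonal entry while keeping a non-scalar block on the remaining indices.

  Since the field is infinite and \<open>p\<close> is nonconstant, \<open>p\<close> takes infinitely many values, so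
  \<open>D = p(T)\<close> has distinct diagonal entries for a suitable diagonal \<open>T\<close>. Write \<open>C' = (D + U) - (D + L)\<close>
  with \<open>U\<close> strictly upper and \<open>L\<close> strictly lower triangular with respect to some enumeration of
  the indices. A triangular perturbation of a diagonal matrix with distinct entries is similar to
  it, so \<open>D + U\<close> and \<open>D + L\<close> are both conjugates of \<open>p(T)\<close>, and a difference of two conjugates
  of \<open>p(T)\<close> has the form \<open>p(AB) - p(BA)\<close>. The image is closed under similarity, hence
  contains \<open>C\<close>.

  Conversely \<open>trace (p(AB)) = trace (p(BA))\<close>, and in characteristic zero the only central
  (i.e. scalar) trace-zero matrix is \<open>0\<close>.
\<close>

lemma matrix_add_rdistrib: "(B + C) ** A = B ** A + C ** (A::'a::semiring_1^'p^'n)"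
  by (vector matrix_matrix_mult_def sum.distrib[symmetric] field_simps)

lemma matrix_diff_ldistrib: "A ** (B - C) = A ** B - A ** (C::'a::ring_1^'p^'n)"
  by (vector matrix_matrix_mult_def sum_subtractf[symmetric] field_simps)

lemma matrix_diff_rdistrib: "(B - C) ** A = B ** A - C ** (A::'a::ring_1^'p^'n)"
  by (vector matrix_matrix_mult_def sum_subtractf[symmetric] field_simps)

lemma mat_mult_nth: "(mat c ** A)$i$j = c * (A::'a::semiring_1^'n^'m)$i$j"
  by (simp add: matrix_matrix_mult_def mat_def if_distrib if_distribR cong: if_cong)

lemma mult_mat_nth: "(A ** mat c)$i$j = (A::'a::semiring_1^'n^'m)$i$j * c"
  by (simp add: matrix_matrix_mult_def mat_def if_distrib if_distribR cong: if_cong)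

lemma mat_mult_commute: "mat c ** (A::'a::comm_semiring_1^'n^'n) = A ** mat c"
  by (simp add: vec_eq_iff mat_mult_nth mult_mat_nth mult.commute)

lemma matrix_mult_conj:
  fixes P Q X Y :: "'a::semiring_1^'n^'n"
  assumes "Q ** P = mat 1"
  shows "(P ** X ** Q) ** (P ** Y ** Q) = P ** (X ** Y) ** Q"
proof -
  have "(P ** X ** Q) ** (P ** Y ** Q) = P ** X ** (Q ** P) ** Y ** Q"
    by (simp add: matrix_mul_assoc)
  then show ?thesis
    using assms by (simp add: matrix_mul_assoc)
qed

lemma sum_delta_mult:
  "(\<Sum>k\<in>(UNIV::'n::finite set). (if k = b then s else 0) * f k) = s * (f b :: 'a::semiring_0)"
proof -
  have "(\<Sum>k\<in>UNIV. (if k = b then s else 0) * f k) = (\<Sum>k\<in>UNIV. if k = b then s * f k else 0)"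
    by (rule sum.cong) auto
  then show ?thesis
    by simp
qed

lemma central_mat_iff_scalar: "central_mat (A::'a::comm_semiring_1^'n^'n) \<longleftrightarrow> (\<exists>c. A = mat c)"
proof
  assume central: "central_mat A"
  fix a :: 'n
  define c where "c = A$a$a"
  have "A$k$i = (if k = i then c else 0)" for k i
  proof -
    define E :: "'a^'n^'n" where "E = (\<chi> x y. if x = i \<and> y = a then 1 else 0)"
    have "(A ** E)$k$a = A$k$i" "(E ** A)$k$a = (if k = i then c else 0)"
      by (simp_all add: E_def c_def matrix_matrix_mult_def if_distrib if_distribR cong: if_cong)
    moreover have "A ** E = E ** A"
      using central unfolding central_mat_def by blast
    ultimately show ?thesis
      by simp
  qed
  then show "\<exists>c. A = mat c"
    by (auto simp: vec_eq_iff mat_def)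
next
  assume "\<exists>c. A = mat c"
  then show "central_mat A"
    unfolding central_mat_def using mat_mult_commute by blast
qed

section \<open>Similarity and shears\<close>

definition similar_mat :: "'a::semiring_1^'n^'n \<Rightarrow> 'a^'n^'n \<Rightarrow> bool" where
  "similar_mat A B \<longleftrightarrow> (\<exists>P Q. P ** Q = mat 1 \<and> Q ** P = mat 1 \<and> B = P ** A ** Q)"

lemma similar_mat_refl: "similar_mat A A"
  unfolding similar_mat_def by (rule exI[of _ "mat 1"], rule exI[of _ "mat 1"]) simp

lemma similar_mat_sym:
  assumes "similar_mat A B"
  shows "similar_mat B A"
proof -
  obtain P Q where PQ: "P ** Q = mat 1" "Q ** P = mat 1" and B: "B = P ** A ** Q"
    using assms unfolding similar_mat_def by blast
  have "Q ** B ** P = (Q ** P) ** A ** (Q ** P)"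
    unfolding B by (simp add: matrix_mul_assoc)
  then have "A = Q ** B ** P"
    using PQ by simp
  then show ?thesis
    using PQ unfolding similar_mat_def by blast
qed

lemma similar_mat_trans:
  assumes "similar_mat A B" "similar_mat B C"
  shows "similar_mat A C"
proof -
  obtain P Q where PQ: "P ** Q = mat 1" "Q ** P = mat 1" and B: "B = P ** A ** Q"
    using assms(1) unfolding similar_mat_def by blast
  obtain P' Q' where PQ': "P' ** Q' = mat 1" "Q' ** P' = mat 1" and C: "C = P' ** B ** Q'"
    using assms(2) unfolding similar_mat_def by blast
  have "(P' ** P) ** (Q ** Q') = P' ** (P ** Q) ** Q'"
    "(Q ** Q') ** (P' ** P) = Q ** (Q' ** P') ** P"
    "C = (P' ** P) ** A ** (Q ** Q')"
    unfolding B C by (simp_all add: matrix_mul_assoc)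
  then show ?thesis
    using PQ PQ' unfolding similar_mat_def by (metis matrix_mul_rid)
qed

lemma trace_similar_mat:
  fixes A :: "'a::comm_semiring_1^'n^'n"
  assumes "similar_mat A B"
  shows "trace B = trace A"
proof -
  obtain P Q where "Q ** P = mat 1" "B = P ** A ** Q"
    using assms unfolding similar_mat_def by blast
  then show ?thesis
    by (metis matrix_mul_assoc matrix_mul_lid trace_mul_sym)
qed

definition shear :: "'n \<Rightarrow> ('n \<Rightarrow> 'a::semiring_1) \<Rightarrow> 'a^'n^'n" where
  "shear a z = mat 1 + (\<chi> i j. if i = a then z j else 0)"

lemma shear_mult_nth:
  "(shear a z ** B)$i$j = B$i$j + (if i = a then \<Sum>k\<in>UNIV. z k * B$k$j else 0)"
  unfolding shear_def matrix_add_rdistrib matrix_mul_lid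
  by (cases "i = a") (simp_all add: matrix_matrix_mult_def)

lemma mult_shear_nth:
  "(B ** shear a z)$i$j = B$i$j + B$i$a * (z j :: 'a::semiring_1)"
  unfolding shear_def matrix_add_ldistrib matrix_mul_rid
  by (simp add: matrix_matrix_mult_def if_distrib if_distribR cong: if_cong)

lemma shear_mult_shear:
  assumes "z a = 0"
  shows "shear a z ** shear a w = shear a (\<lambda>k. z k + w k)"
  using assms by (auto simp: vec_eq_iff mult_shear_nth) (simp_all add: shear_def mat_def add.assoc)

lemma similar_mat_shear_conj:
  fixes B :: "'a::ring_1^'n^'n"
  assumes "z a = 0"
  shows "similar_mat B (shear a z ** B ** shear a (\<lambda>k. - z k))"
proof -
  have "shear a (\<lambda>_. 0) = (mat 1 :: 'a^'n^'n)"
    by (simp add: shear_def vec_eq_iff)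
  then have "shear a z ** shear a (\<lambda>k. - z k) = mat 1" "shear a (\<lambda>k. - z k) ** shear a z = mat 1"
    using assms by (simp_all add: shear_mult_shear)
  then show ?thesis
    unfolding similar_mat_def by blast
qed

lemma shear_conj_nth:
  "(shear a z ** B ** shear a (\<lambda>k. - z k))$i$j
     = B$i$j + (if i = a then \<Sum>k\<in>UNIV. z k * B$k$j else 0)
       - (B$i$a + (if i = a then \<Sum>k\<in>UNIV. z k * B$k$a else 0)) * (z j :: 'a::ring_1)"
  by (simp add: mult_shear_nth shear_mult_nth)

section \<open>Fillmore's zero-diagonal form\<close>

definition scalar_on :: "'n set \<Rightarrow> 'a::zero^'n^'n \<Rightarrow> bool" where
  "scalar_on J A \<longleftrightarrow> (\<exists>c. \<forall>i\<in>J. \<forall>j\<in>J. A$i$j = (if i = j then c else 0))"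

lemma similar_mat_offdiag_nonzero:
  fixes B :: "'a::ring_1^'n^'n"
  assumes "\<not> scalar_on J B"
  shows "\<exists>B' a b. similar_mat B B' \<and> a \<in> J \<and> b \<in> J \<and> b \<noteq> a \<and> B'$b$a \<noteq> 0
    \<and> (\<forall>i. i \<notin> J \<longrightarrow> B'$i$i = B$i$i)"
proof (cases "\<exists>a\<in>J. \<exists>b\<in>J. b \<noteq> a \<and> B$b$a \<noteq> 0")
  case True
  then show ?thesis
    using similar_mat_refl by blast
next
  case diagonal: False
  obtain a b where ab: "a \<in> J" "b \<in> J" "B$b$b \<noteq> B$a$a"
  proof -
    obtain a where "a \<in> J"
      using assms unfolding scalar_on_def by blast
    moreover have "\<exists>b\<in>J. B$b$b \<noteq> B$a$a"
    proof (rule ccontr)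
      assume "\<not> (\<exists>b\<in>J. B$b$b \<noteq> B$a$a)"
      then have "\<forall>i\<in>J. \<forall>j\<in>J. B$i$j = (if i = j then B$a$a else 0)"
        using diagonal by auto
      then show False
        using assms unfolding scalar_on_def by blast
    qed
    ultimately show ?thesis
      using that by blast
  qed
  then have "b \<noteq> a" "B$b$a = 0" "B$a$b = 0"
    using diagonal by auto
  define z :: "'n \<Rightarrow> 'a" where "z = (\<lambda>k. if k = a then 1 else 0)"
  define B' where "B' = shear b z ** B ** shear b (\<lambda>k. - z k)"
  \<comment> \<open>Adding row \<open>a\<close> to row \<open>b\<close>, and subtracting column \<open>b\<close> from column \<open>a\<close>, moves the
      difference of the two diagonal entries to position \<open>(b, a)\<close>.\<close>
  have "B'$b$a = B$a$a - B$b$b"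
    using \<open>b \<noteq> a\<close> \<open>B$b$a = 0\<close> \<open>B$a$b = 0\<close> unfolding B'_def shear_conj_nth
    by (simp add: z_def sum_delta_mult)
  moreover have "\<forall>i. i \<notin> J \<longrightarrow> B'$i$i = B$i$i"
    using ab unfolding B'_def shear_conj_nth by (auto simp: z_def)
  moreover have "similar_mat B B'"
    unfolding B'_def by (rule similar_mat_shear_conj) (use \<open>b \<noteq> a\<close> in \<open>simp add: z_def\<close>)
  ultimately show ?thesis
    using ab \<open>b \<noteq> a\<close> by (metis right_minus_eq)
qed

lemma similar_mat_diag_entry_zero:
  fixes B :: "'a::field^'n^'n"
  assumes "a \<in> J" "b \<in> J" "b \<noteq> a" "B$b$a \<noteq> 0"
  shows "\<exists>B'. similar_mat B B' \<and> B'$a$a = 0 \<and> (\<forall>i. i \<notin> J \<longrightarrow> B'$i$i = B$i$i)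
    \<and> (2 \<le> card (J - {a}) \<longrightarrow> \<not> scalar_on (J - {a}) B')"
proof -
  obtain b' where b': "b' \<in> J" "b' \<noteq> a" "2 \<le> card (J - {a}) \<longrightarrow> b' \<noteq> b"
  proof (cases "2 \<le> card (J - {a})")
    case True
    have "J - {a} - {b} \<noteq> {}"
    proof
      assume "J - {a} - {b} = {}"
      then have "J - {a} \<subseteq> {b}"
        by blast
      then show False
        using True card_mono[of "{b}" "J - {a}"] by simp
    qed
    then show ?thesis
      using that by blast
  next
    case False
    then show ?thesis
      using that assms by blast
  qed
  \<comment> \<open>Add \<open>s\<close> times row \<open>b\<close> and \<open>t\<close> times row \<open>b'\<close> to row \<open>a\<close>: \<open>s\<close> kills the \<open>(a, a)\<close> entry
      and \<open>t\<close> makes the \<open>(b, b')\<close> entry \<open>1\<close>, so the block on \<open>J - {a}\<close> stays non-scalar.\<close>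
  define t where "t = (B$b$b' - 1) / B$b$a"
  define s where "s = - (B$a$a + t * B$b'$a) / B$b$a"
  define z where "z = (\<lambda>k. (if k = b then s else 0) + (if k = b' then t else 0))"
  define B' where "B' = shear a z ** B ** shear a (\<lambda>k. - z k)"
  have "z a = 0"
    using assms b' by (simp add: z_def)
  have "(\<Sum>k\<in>UNIV. z k * B$k$a) = s * B$b$a + t * B$b'$a"
    by (simp add: z_def distrib_right sum.distrib sum_delta_mult)
  then have "B'$a$a = 0"
    using \<open>z a = 0\<close> assms unfolding B'_def shear_conj_nth by (simp add: s_def field_simps)
  moreover have "2 \<le> card (J - {a}) \<longrightarrow> \<not> scalar_on (J - {a}) B'"
  proof
    assume "2 \<le> card (J - {a})"
    then have "b' \<noteq> b"
      using b' by blast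
    then have "B'$b$b' = 1"
      using assms unfolding B'_def shear_conj_nth by (simp add: z_def t_def field_simps)
    moreover have "b \<in> J - {a}" "b' \<in> J - {a}"
      using assms b' by auto
    ultimately show "\<not> scalar_on (J - {a}) B'"
      using \<open>b' \<noteq> b\<close> unfolding scalar_on_def by (metis zero_neq_one)
  qed
  moreover have "\<forall>i. i \<notin> J \<longrightarrow> B'$i$i = B$i$i"
    using assms b' unfolding B'_def shear_conj_nth by (auto simp: z_def)
  moreover have "similar_mat B B'"
    unfolding B'_def using \<open>z a = 0\<close> by (rule similar_mat_shear_conj)
  ultimately show ?thesis
    by blast
qed

lemma sum_diag_similar_mat:
  fixes B :: "'a::comm_ring_1^'n^'n"
  assumes "similar_mat B B'" "\<forall>i. i \<notin> J \<longrightarrow> B'$i$i = B$i$i"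
  shows "(\<Sum>i\<in>J. B'$i$i) = (\<Sum>i\<in>J. B$i$i)"
proof -
  have split: "trace A = (\<Sum>i\<in>UNIV - J. A$i$i) + (\<Sum>i\<in>J. A$i$i)" for A :: "'a^'n^'n"
    unfolding trace_def by (rule sum.subset_diff) auto
  have "(\<Sum>i\<in>UNIV - J. B'$i$i) = (\<Sum>i\<in>UNIV - J. B$i$i)"
    by (rule sum.cong) (use assms(2) in auto)
  then show ?thesis
    using split[of B] split[of B'] trace_similar_mat[OF assms(1)] by simp
qed

lemma similar_mat_zero_diag_entry_step:
  fixes B :: "'a::field^'n^'n"
  assumes "\<not> scalar_on J B"
  shows "\<exists>B' a. similar_mat B B' \<and> a \<in> J \<and> B'$a$a = 0
    \<and> (\<Sum>i\<in>J - {a}. B'$i$i) = (\<Sum>i\<in>J. B$i$i) \<and> (\<forall>i. i \<notin> J \<longrightarrow> B'$i$i = B$i$i)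
    \<and> (2 \<le> card (J - {a}) \<longrightarrow> \<not> scalar_on (J - {a}) B')"
proof -
  obtain B0 a b where B0: "similar_mat B B0" "a \<in> J" "b \<in> J" "b \<noteq> a" "B0$b$a \<noteq> 0"
    "\<forall>i. i \<notin> J \<longrightarrow> B0$i$i = B$i$i"
    using similar_mat_offdiag_nonzero[OF assms] by blast
  obtain B' where B': "similar_mat B0 B'" "B'$a$a = 0" "\<forall>i. i \<notin> J \<longrightarrow> B'$i$i = B0$i$i"
    "2 \<le> card (J - {a}) \<longrightarrow> \<not> scalar_on (J - {a}) B'"
    using similar_mat_diag_entry_zero[OF B0(2-5)] by blast
  have "similar_mat B B'"
    using B0(1) B'(1) by (rule similar_mat_trans)
  moreover have off: "\<forall>i. i \<notin> J \<longrightarrow> B'$i$i = B$i$i"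
    using B0(6) B'(3) by simp
  ultimately have "(\<Sum>i\<in>J. B'$i$i) = (\<Sum>i\<in>J. B$i$i)"
    by (rule sum_diag_similar_mat)
  then have "(\<Sum>i\<in>J - {a}. B'$i$i) = (\<Sum>i\<in>J. B$i$i)"
    using B'(2) B0(2) sum.remove[of J a "\<lambda>i. B'$i$i"] by simp
  then show ?thesis
    using \<open>similar_mat B B'\<close> B0(2) B'(2,4) off by blast
qed

lemma similar_mat_zero_diagonal_on:
  fixes B :: "'a::field^'n^'n"
  assumes "2 \<le> card J \<longrightarrow> \<not> scalar_on J B" and "(\<Sum>i\<in>J. B$i$i) = 0"
  shows "\<exists>B'. similar_mat B B' \<and> (\<forall>i\<in>J. B'$i$i = 0) \<and> (\<forall>i. i \<notin> J \<longrightarrow> B'$i$i = B$i$i)"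
  using assms
proof (induction "card J" arbitrary: J B rule: less_induct)
  case less
  show ?case
  proof (cases "card J \<le> 1")
    case True
    have "B$i$i = 0" if "i \<in> J" for i
    proof -
      have "J = {i}"
        using that True card_le_Suc0_iff_eq[of J] by auto
      then show ?thesis
        using less.prems(2) by simp
    qed
    then show ?thesis
      using similar_mat_refl by blast
  next
    case False
    then have "\<not> scalar_on J B"
      using less.prems(1) by simp
    then obtain B1 a where B1: "similar_mat B B1" "a \<in> J" "B1$a$a = 0"
      "(\<Sum>i\<in>J - {a}. B1$i$i) = (\<Sum>i\<in>J. B$i$i)" "\<forall>i. i \<notin> J \<longrightarrow> B1$i$i = B$i$i"
      "2 \<le> card (J - {a}) \<longrightarrow> \<not> scalar_on (J - {a}) B1"
      using similar_mat_zero_diag_entry_step by blast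
    have "card (J - {a}) < card J"
      using B1(2) by (intro card_Diff1_less) auto
    moreover have "(\<Sum>i\<in>J - {a}. B1$i$i) = 0"
      using B1(4) less.prems(2) by simp
    ultimately obtain B2 where B2: "similar_mat B1 B2" "\<forall>i\<in>J - {a}. B2$i$i = 0"
      "\<forall>i. i \<notin> J - {a} \<longrightarrow> B2$i$i = B1$i$i"
      using less.hyps B1(6) by blast
    have "similar_mat B B2"
      using B1(1) B2(1) by (rule similar_mat_trans)
    moreover have "\<forall>i\<in>J. B2$i$i = 0"
      using B1(3) B2(2,3) by (metis DiffI singletonD)
    moreover have "\<forall>i. i \<notin> J \<longrightarrow> B2$i$i = B$i$i"
      using B1(5) B2(3) by simp
    ultimately show ?thesis
      by blast
  qed
qed

lemma similar_mat_zero_diagonal: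
  fixes B :: "'a::field^'n^'n"
  assumes "\<not> central_mat B" "trace B = 0"
  shows "\<exists>B'. similar_mat B B' \<and> (\<forall>i. B'$i$i = 0)"
proof -
  have "\<not> scalar_on UNIV B"
  proof
    assume "scalar_on UNIV B"
    then obtain c where "\<forall>i j. B$i$j = (if i = j then c else 0)"
      unfolding scalar_on_def by blast
    then have "B = mat c"
      by (simp add: vec_eq_iff mat_def)
    then show False
      using assms(1) central_mat_iff_scalar by blast
  qed
  then obtain B' where "similar_mat B B'" "\<forall>i\<in>UNIV. B'$i$i = 0"
    using similar_mat_zero_diagonal_on[of UNIV B] assms(2) unfolding trace_def by blast
  then show ?thesis
    by blast
qed

section \<open>Triangular perturbations of diagonal matrices\<close>

definition diag_mat :: "('n \<Rightarrow> 'a::zero) \<Rightarrow> 'a^'n^'n" where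
  "diag_mat d = (\<chi> i j. if i = j then d i else 0)"

lemma diag_mat_nth [simp]: "diag_mat d $ i $ j = (if i = j then d i else 0)"
  by (simp add: diag_mat_def)

lemma similar_mat_diag_plus_clear_row:
  fixes d :: "'n::finite \<Rightarrow> 'a::field" and f :: "'n \<Rightarrow> 'b::linorder"
  assumes "inj d"
    and triangular: "\<forall>i j. U$i$j \<noteq> 0 \<longrightarrow> f i < f j"
    and top: "\<forall>i j. U$i$j \<noteq> 0 \<longrightarrow> f i \<le> f a"
  shows "similar_mat (diag_mat d + U)
    (diag_mat d + (\<chi> i j. if i = a then 0 else U$i$j - U$i$a * (U$a$j / (d a - d j))))"
proof -
  define z where "z = (\<lambda>j. U$a$j / (d a - d j))"
  define D where "D = diag_mat d + U"
  have "U$a$a = 0"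
    using triangular by blast
  then have "z a = 0"
    by (simp add: z_def)
  \<comment> \<open>\<open>z k \<noteq> 0\<close> forces \<open>f a < f k\<close>, so row \<open>k\<close> of \<open>U\<close> vanishes by maximality of \<open>f a\<close>.\<close>
  have z_rows: "z k * D$k$j = (if k = j then z j * d j else 0)" for k j
  proof (cases "z k = 0")
    case False
    then have "f a < f k"
      using triangular by (auto simp: z_def)
    then have "U$k$j = 0"
      using top by (meson not_le)
    then show ?thesis
      by (simp add: D_def)
  qed auto
  have "(shear a z ** D ** shear a (\<lambda>k. - z k))$i$j
      = (diag_mat d + (\<chi> i j. if i = a then 0 else U$i$j - U$i$a * z j))$i$j" for i j
  proof (cases "i = a")
    case True
    show ?thesis
    proof (cases "j = a")
      case True
      then show ?thesis
        using \<open>i = a\<close> \<open>z a = 0\<close> \<open>U$a$a = 0\<close> unfolding shear_conj_nth z_rows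
        by (simp add: D_def)
    next
      case False
      then have "d a - d j \<noteq> 0"
        using \<open>inj d\<close> by (auto dest: injD)
      then show ?thesis
        using \<open>i = a\<close> False \<open>z a = 0\<close> \<open>U$a$a = 0\<close> unfolding shear_conj_nth z_rows
        by (simp add: D_def z_def field_simps)
    qed
  next
    case False
    then show ?thesis
      unfolding shear_conj_nth by (simp add: D_def)
  qed
  then have "shear a z ** D ** shear a (\<lambda>k. - z k)
      = diag_mat d + (\<chi> i j. if i = a then 0 else U$i$j - U$i$a * z j)"
    by (simp add: vec_eq_iff)
  moreover have "similar_mat D (shear a z ** D ** shear a (\<lambda>k. - z k))"
    using \<open>z a = 0\<close> by (rule similar_mat_shear_conj)
  ultimately show ?thesis
    unfolding D_def z_def by simp
qed

lemma similar_mat_diag_plus_triangular: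
  fixes d :: "'n::finite \<Rightarrow> 'a::field" and f :: "'n \<Rightarrow> 'b::linorder"
  assumes "inj d" and "\<forall>i j. U$i$j \<noteq> 0 \<longrightarrow> f i < f j"
  shows "similar_mat (diag_mat d) (diag_mat d + U)"
  using assms(2)
proof (induction "card {i. \<exists>j. U$i$j \<noteq> 0}" arbitrary: U rule: less_induct)
  case less
  define R where "R = {i. \<exists>j. U$i$j \<noteq> 0}"
  show ?case
  proof (cases "R = {}")
    case True
    then have "U = 0"
      by (auto simp: R_def vec_eq_iff)
    then show ?thesis
      using similar_mat_refl by simp
  next
    case False
    then have "Max (f ` R) \<in> f ` R"
      by (intro Max_in) auto
    then obtain a where "a \<in> R" "f a = Max (f ` R)"
      by (metis imageE)
    then have top: "\<forall>i\<in>R. f i \<le> f a"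
      by simp
    define U' where "U' = (\<chi> i j. if i = a then 0 else U$i$j - U$i$a * (U$a$j / (d a - d j)))"
    have "similar_mat (diag_mat d + U) (diag_mat d + U')"
      unfolding U'_def using assms(1) less.prems top
      by (intro similar_mat_diag_plus_clear_row) (auto simp: R_def)
    moreover have U': "\<forall>i j. U'$i$j \<noteq> 0 \<longrightarrow> i \<in> R - {a} \<and> f i < f j"
    proof (intro allI impI)
      fix i j
      assume "U'$i$j \<noteq> 0"
      then have "i \<noteq> a" and nonzero: "U$i$j \<noteq> 0 \<or> U$i$a \<noteq> 0 \<and> U$a$j \<noteq> 0"
        by (auto simp: U'_def split: if_splits)
      have "f i < f j"
        using nonzero less.prems order.strict_trans by blast
      moreover have "i \<in> R"
        using nonzero by (auto simp: R_def)
      ultimately show "i \<in> R - {a} \<and> f i < f j"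
        using \<open>i \<noteq> a\<close> by blast
    qed
    then have "{i. \<exists>j. U'$i$j \<noteq> 0} \<subset> R"
      using \<open>a \<in> R\<close> by blast
    then have "similar_mat (diag_mat d) (diag_mat d + U')"
      using less.hyps U' unfolding R_def by (meson finite psubset_card_mono)
    ultimately show ?thesis
      using similar_mat_sym similar_mat_trans by blast
  qed
qed

section \<open>Polynomials of matrices\<close>

lemma diag_mat_mult: "diag_mat s ** diag_mat t = diag_mat (\<lambda>i. s i * (t i :: 'a::semiring_1))"
proof -
  have "(diag_mat s ** diag_mat t)$i$j
      = (\<Sum>k\<in>UNIV. if k = i then s i * (if i = j then t i else 0) else 0)" for i j
    unfolding matrix_matrix_mult_def vec_lambda_beta diag_mat_nth by (rule sum.cong) auto
  then show ?thesis
    by (simp add: vec_eq_iff)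
qed

lemma matpow_diag_mat: "matpow (diag_mat t) k = diag_mat (\<lambda>i. (t i :: 'a::semiring_1) ^ k)"
proof (induction k)
  case 0
  then show ?case
    by (simp add: vec_eq_iff mat_def)
next
  case (Suc k)
  then show ?case
    by (simp add: diag_mat_mult)
qed

lemma poly_mat_diag_mat: "poly_mat p (diag_mat t) = diag_mat (\<lambda>i. poly p (t i :: 'a::comm_ring_1))"
proof -
  have "poly_mat p (diag_mat t) $ i $ j = (\<Sum>k\<le>degree p. coeff p k * (if i = j then t i ^ k else 0))"
    for i j
    by (simp add: poly_mat_def matpow_diag_mat mat_mult_nth)
  then show ?thesis
    by (simp add: vec_eq_iff poly_altdef)
qed

lemma matpow_conj:
  fixes P Q X :: "'a::semiring_1^'n^'n"
  assumes "P ** Q = mat 1" "Q ** P = mat 1"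
  shows "matpow (P ** X ** Q) k = P ** matpow X k ** Q"
proof (induction k)
  case 0
  then show ?case
    using assms(1) by simp
next
  case (Suc k)
  then show ?case
    using matrix_mult_conj[OF assms(2)] by simp
qed

lemma matrix_mult_sum_conj:
  fixes P Q :: "'a::semiring_1^'n^'n"
  shows "P ** (\<Sum>i\<in>S. M i) ** Q = (\<Sum>i\<in>S. P ** M i ** Q)"
proof (induction S rule: infinite_finite_induct)
  case (insert x F)
  then show ?case
    by (simp add: matrix_add_ldistrib matrix_add_rdistrib)
qed simp_all

lemma poly_mat_conj:
  fixes P Q X :: "'a::comm_ring_1^'n^'n"
  assumes "P ** Q = mat 1" "Q ** P = mat 1"
  shows "poly_mat p (P ** X ** Q) = P ** poly_mat p X ** Q"
proof -
  have "P ** (mat c ** M) ** Q = mat c ** (P ** M ** Q)" for c and M :: "'a^'n^'n"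
  proof -
    have "P ** (mat c ** M) ** Q = (P ** mat c) ** M ** Q"
      by (simp add: matrix_mul_assoc)
    also have "\<dots> = (mat c ** P) ** M ** Q"
      using mat_mult_commute[of c P] by simp
    finally show ?thesis
      by (simp add: matrix_mul_assoc)
  qed
  then show ?thesis
    by (simp add: poly_mat_def matrix_mult_sum_conj matpow_conj[OF assms])
qed

lemma matpow_mult_Suc:
  fixes A B :: "'a::semiring_1^'n^'n"
  shows "matpow (A ** B) (Suc k) = A ** matpow (B ** A) k ** B"
proof (induction k)
  case (Suc k)
  then show ?case
    by (simp add: matrix_mul_assoc)
qed simp

lemma trace_matpow_mult_commute:
  fixes A B :: "'a::comm_semiring_1^'n^'n"
  shows "trace (matpow (A ** B) k) = trace (matpow (B ** A) k)"
proof (cases k)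
  case (Suc m)
  have "trace (matpow (A ** B) k) = trace (A ** matpow (B ** A) m ** B)"
    by (simp only: Suc matpow_mult_Suc)
  also have "\<dots> = trace (B ** (A ** matpow (B ** A) m))"
    by (rule trace_mul_sym)
  also have "\<dots> = trace (matpow (B ** A) k)"
    using Suc by (simp add: matrix_mul_assoc)
  finally show ?thesis .
qed simp

lemma trace_sum: "trace (\<Sum>i\<in>S. M i) = (\<Sum>i\<in>S. trace (M i :: 'a::comm_semiring_1^'n^'n))"
  by (simp add: trace_def sum.swap[of _ S])

lemma trace_mat_mult: "trace (mat c ** M) = c * trace (M::'a::semiring_1^'n^'n)"
  by (simp add: trace_def mat_mult_nth sum_distrib_left)

lemma trace_poly_mat_mult_commute:
  fixes A B :: "'a::comm_ring_1^'n^'n"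
  shows "trace (poly_mat p (A ** B)) = trace (poly_mat p (B ** A))"
  by (simp add: poly_mat_def trace_sum trace_mat_mult trace_matpow_mult_commute)

lemma infinite_range_poly:
  fixes p :: "'a::field poly"
  assumes "infinite (UNIV :: 'a set)" "degree p > 0"
  shows "infinite (range (poly p))"
proof
  assume "finite (range (poly p))"
  moreover have "finite (poly p -` {y})" for y
  proof -
    have "p - [:y:] \<noteq> 0"
      using assms(2) by (metis degree_pCons_0 less_irrefl right_minus_eq)
    then have "finite {x. poly (p - [:y:]) x = 0}"
      by (rule poly_roots_finite)
    moreover have "{x. poly (p - [:y:]) x = 0} = poly p -` {y}"
      by auto
    ultimately show ?thesis
      by simp
  qed
  ultimately have "finite (\<Union>y\<in>range (poly p). poly p -` {y})"
    by (intro finite_UN_I)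
  moreover have "(\<Union>y\<in>range (poly p). poly p -` {y}) = UNIV"
    by blast
  ultimately show False
    using assms(1) by simp
qed

lemma ex_inj_poly_comp:
  fixes p :: "'a::field poly"
  assumes "infinite (UNIV :: 'a set)" "degree p > 0"
  shows "\<exists>t :: 'n::finite \<Rightarrow> 'a. inj (\<lambda>i. poly p (t i))"
proof -
  obtain g :: "nat \<Rightarrow> 'a" where g: "inj g" "range g \<subseteq> range (poly p)"
    using infinite_countable_subset[OF infinite_range_poly[OF assms]] by blast
  define t :: "'n \<Rightarrow> 'a" where "t = (\<lambda>i. inv (poly p) (g (to_nat i)))"
  have "poly p (t i) = g (to_nat i)" for i
  proof -
    have "g (to_nat i) \<in> range (poly p)"
      using g(2) by blast
    then show ?thesis
      by (simp add: t_def f_inv_into_f)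
  qed
  then have "inj (\<lambda>i. poly p (t i))"
    by (simp add: inj_def inj_eq[OF g(1)] inj_eq[OF inj_to_nat])
  then show ?thesis
    by blast
qed

section \<open>The image of \<open>p\<close> on commutator pairs\<close>

lemma zero_mem_poly_commutator_image: "0 \<in> poly_commutator_image p"
  unfolding poly_commutator_image_def by force

lemma poly_commutator_image_subset_trace_zero:
  "(poly_commutator_image p :: ('a::comm_ring_1^'n^'n) set) \<subseteq> {A. trace A = 0}"
  by (auto simp: poly_commutator_image_def trace_sub trace_poly_mat_mult_commute)

lemma poly_commutator_image_similar:
  fixes p :: "'a::comm_ring_1 poly" and M N :: "'a^'n^'n"
  assumes "M \<in> poly_commutator_image p" "similar_mat M N"
  shows "N \<in> poly_commutator_image p"
proof -
  obtain A B where M: "M = poly_mat p (A ** B) - poly_mat p (B ** A)"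
    using assms(1) unfolding poly_commutator_image_def by blast
  obtain P Q where PQ: "P ** Q = mat 1" "Q ** P = mat 1" and N: "N = P ** M ** Q"
    using assms(2) unfolding similar_mat_def by blast
  have "N = P ** poly_mat p (A ** B) ** Q - P ** poly_mat p (B ** A) ** Q"
    unfolding N M by (simp add: matrix_diff_ldistrib matrix_diff_rdistrib)
  also have "\<dots> = poly_mat p ((P ** A ** Q) ** (P ** B ** Q))
      - poly_mat p ((P ** B ** Q) ** (P ** A ** Q))"
    unfolding matrix_mult_conj[OF PQ(2)] poly_mat_conj[OF PQ] ..
  finally show ?thesis
    unfolding poly_commutator_image_def by blast
qed

text \<open>If \<open>Z\<^sub>1 = P p(X) Q\<close> and \<open>Z\<^sub>2 = P' p(X) Q'\<close>, then \<open>A = P Q'\<close> and \<open>B = P' X Q\<close> give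
  \<open>AB = P X Q\<close> and \<open>BA = P' X Q'\<close>.\<close>

lemma diff_similar_poly_mat_mem_poly_commutator_image:
  fixes p :: "'a::comm_ring_1 poly" and X :: "'a^'n^'n"
  assumes "similar_mat (poly_mat p X) Z\<^sub>1" "similar_mat (poly_mat p X) Z\<^sub>2"
  shows "Z\<^sub>1 - Z\<^sub>2 \<in> poly_commutator_image p"
proof -
  obtain P Q where PQ: "P ** Q = mat 1" "Q ** P = mat 1" and Z\<^sub>1: "Z\<^sub>1 = P ** poly_mat p X ** Q"
    using assms(1) unfolding similar_mat_def by blast
  obtain P' Q' where PQ': "P' ** Q' = mat 1" "Q' ** P' = mat 1"
    and Z\<^sub>2: "Z\<^sub>2 = P' ** poly_mat p X ** Q'"
    using assms(2) unfolding similar_mat_def by blast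
  have "(P ** Q') ** (P' ** X ** Q) = P ** (Q' ** P') ** X ** Q"
    "(P' ** X ** Q) ** (P ** Q') = P' ** X ** (Q ** P) ** Q'"
    by (simp_all add: matrix_mul_assoc)
  then have "Z\<^sub>1 - Z\<^sub>2
      = poly_mat p ((P ** Q') ** (P' ** X ** Q)) - poly_mat p ((P' ** X ** Q) ** (P ** Q'))"
    using PQ(2) PQ'(2) by (simp add: Z\<^sub>1 Z\<^sub>2 poly_mat_conj[OF PQ] poly_mat_conj[OF PQ'])
  then show ?thesis
    unfolding poly_commutator_image_def by blast
qed

lemma zero_diagonal_mem_poly_commutator_image:
  fixes p :: "'a::field poly" and C :: "'a^'n^'n" and t :: "'n \<Rightarrow> 'a"
  assumes "inj (\<lambda>i. poly p (t i))" "\<forall>i. C$i$i = 0"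
  shows "C \<in> poly_commutator_image p"
proof -
  define r :: "'n \<Rightarrow> nat" where "r = to_nat"
  define D where "D = poly_mat p (diag_mat t)"
  define U :: "'a^'n^'n" where "U = (\<chi> i j. if r i < r j then C$i$j else 0)"
  define L :: "'a^'n^'n" where "L = (\<chi> i j. if r j < r i then - C$i$j else 0)"
  have D: "D = diag_mat (\<lambda>i. poly p (t i))"
    by (simp add: D_def poly_mat_diag_mat)
  have "similar_mat D (D + U)"
    unfolding D by (rule similar_mat_diag_plus_triangular[OF assms(1), of _ r]) (simp add: U_def)
  moreover have "similar_mat D (D + L)"
    unfolding D
    by (rule similar_mat_diag_plus_triangular[OF assms(1), of _ "\<lambda>i. - int (r i)"]) (simp add: L_def)
  ultimately have "(D + U) - (D + L) \<in> poly_commutator_image p"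
    unfolding D_def by (rule diff_similar_poly_mat_mem_poly_commutator_image)
  moreover have "r i = r j \<longleftrightarrow> i = j" for i j
    by (simp add: r_def inj_eq)
  then have "(D + U) - (D + L) = C"
    using assms(2) by (auto simp: vec_eq_iff U_def L_def)
  ultimately show ?thesis
    by simp
qed

lemma noncentral_trace_zero_mem_poly_commutator_image:
  fixes p :: "'a::field poly" and C :: "'a^'n^'n"
  assumes "infinite (UNIV :: 'a set)" "degree p > 0" "\<not> central_mat C" "trace C = 0"
  shows "C \<in> poly_commutator_image p"
proof -
  obtain C' where "similar_mat C C'" "\<forall>i. C'$i$i = 0"
    using similar_mat_zero_diagonal[OF assms(3,4)] by blast
  moreover obtain t :: "'n \<Rightarrow> 'a" where "inj (\<lambda>i. poly p (t i))"
    using ex_inj_poly_comp[OF assms(1,2)] by blast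
  ultimately have "C' \<in> poly_commutator_image p"
    using zero_diagonal_mem_poly_commutator_image by blast
  then show ?thesis
    using poly_commutator_image_similar similar_mat_sym \<open>similar_mat C C'\<close> by blast
qed

lemma central_trace_zero_eq_0:
  fixes A :: "'a::idom^'n^'n"
  assumes "CHAR('a) = 0" "central_mat A" "trace A = 0"
  shows "A = 0"
proof -
  obtain c where "A = mat c"
    using assms(2) central_mat_iff_scalar by blast
  moreover have "trace (mat c :: 'a^'n^'n) = of_nat CARD('n) * c"
    by (simp add: trace_def mat_def)
  moreover have "of_nat CARD('n) \<noteq> (0 :: 'a)"
    using assms(1) by (simp add: of_nat_eq_0_iff_char_dvd)
  ultimately show ?thesis
    using assms(3) by simp
qed

lemma trace_zero_mem_poly_commutator_image:
  fixes p :: "'a::field poly" and A :: "'a^'n^'n"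
  assumes "infinite (UNIV :: 'a set)" "CHAR('a) = 0" "degree p > 0" "trace A = 0"
  shows "A \<in> poly_commutator_image p"
proof (cases "central_mat A")
  case True
  then show ?thesis
    using central_trace_zero_eq_0 zero_mem_poly_commutator_image assms(2,4) by metis
next
  case False
  then show ?thesis
    using noncentral_trace_zero_mem_poly_commutator_image assms(1,3,4) by blast
qed

theorem corollary3p5:
  fixes p :: "'a::field poly"
  assumes "infinite (UNIV :: 'a set)"
    and "CARD('n::finite) > 1"
    and "degree p > 0"
  shows "(\<forall>A :: 'a^'n^'n. \<not> central_mat A \<and> trace A = 0 \<longrightarrow> A \<in> poly_commutator_image p)
         \<and> (CHAR('a) = 0 \<longrightarrow>
              (poly_commutator_image p :: ('a^'n^'n) set) = {A. trace A = 0})"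
  using noncentral_trace_zero_mem_poly_commutator_image[OF assms(1,3)]
    trace_zero_mem_poly_commutator_image[OF assms(1) _ assms(3)]
    poly_commutator_image_subset_trace_zero
  by blast

end
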